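(* The target counital subalgebra of $H_\mathcal{C}$ is $$H_t(H_\mathcal{C})=\mathrm{span}\Big\{\sum_{k,b}\frac{\sqrt{d_k}}{\sqrt{d_a}}\,e^{ab}_{k;ab}\ :\ a\in Irr(\mathcal{C})\Big\}$$ (sum over $k,b$ with $(a,k,b)$ admissible). Moreover $\dim_\mathbb{C}H_t(H_\mathcal{C})=\dim_\mathbb{C}V_\mathbf{1}$, and $H_t(H_\mathcal{C})\cong V_\mathbf{1}$ as $H_\mathcal{C}$-modules; in particular $H_t(H_\mathcal{C})$ is simple.
   Context: $\mathcal{C}$ is a unitary fusion category, multiplicity free, whose simple objects are self-dual with trivial Frobenius–Schur indicators; $Irr(\mathcal{C})$ its simple objects, $d_a$ quantum dimensions, $(a,b,c)$ admissible iff $\mathrm{Hom}(a\otimes b,c)\ne0$; unitary $F$-symbols $F^{abc}_{d;nm}$ with trivalent vertices normalized so that $\theta(a,b,c)=\sqrt{d_ad_bd_c}$. $H_\mathcal{C}$ has basis $e^{ab}_{i;cd}$ ($(a,i,b)$, $(i,d,c)$ admissible), multiplication $e^{ab}_{i;cd}e^{a'b'}_{i';c'd'}=\frac{\delta_{c,a'}\delta_{d,b'}\delta_{i,i'}}{\sqrt{d_i}}e^{ab}_{i;c'd'}$, unit $\eta=\sum_{a,b,i}\sqrt{d_i}e^{ab}_{i;ab}$, counit $\varepsilon(e^{ab}_{i;cd})=\delta_{a,b}\delta_{c,d}\delta_{i,\mathbf{1}}$, comultiplication $\Delta(e^{ab}_{i;cd})=\sum_{j,k,p,q}\frac{\sqrt{d_jd_k}}{\sqrt{d_i}}F^{ajk}_{b;ip}F^{dkj}_{c;iq}e^{ap}_{j;cq}\otimes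 e^{pb}_{k;qd}$, antipode $S(e^{ab}_{i;cd})=\frac{\sqrt{d_bd_c}}{\sqrt{d_ad_d}}e^{dc}_{i;ba}$. The target counital map is $\varepsilon_t(h)=\varepsilon(\eta_{(1)}h)\eta_{(2)}$ and $H_t(H_\mathcal{C})=\varepsilon_t(H_\mathcal{C})$, an $H_\mathcal{C}$-module via $h\cdot z=\varepsilon_t(hz)$. For $i\in Irr(\mathcal{C})$, $V_i$ is the $H_\mathcal{C}$-module with basis $v^{ab}_i$ ($(a,i,b)$ admissible) and action $e^{ab}_{j;cd}\cdot v^{pq}_i=\frac{\delta_{i,j}\delta_{c,p}\delta_{d,q}}{\sqrt{d_i}}v^{ab}_i$. *)

theory Defs
  imports Complex_Main "HOL-Library.Function_Algebras"
begin

text \<open>Fsym C a b c d n m stands for F^{abc}_{d;nm},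
where (following the comultiplication formula) n labels the fusion channel of b and c
(with a n fusing to d) and m labels the fusion channel of a and b (with m c fusing to d).\<close>

record 'l fusion_data =
  lab :: "'l set"
  unit_lab :: 'l
  adm :: "'l \<Rightarrow> 'l \<Rightarrow> 'l \<Rightarrow> bool"
  qd :: "'l \<Rightarrow> real"
  Fsym :: "'l \<Rightarrow> 'l \<Rightarrow> 'l \<Rightarrow> 'l \<Rightarrow> 'l \<Rightarrow> 'l \<Rightarrow> complex"

definition umf_fusion :: "'l fusion_data \<Rightarrow> bool" where
  "umf_fusion C \<longleftrightarrow>
     finite (lab C) \<and> unit_lab C \<in> lab C \<and>
     (\<forall>a b c. adm C a b c \<longrightarrow> a \<in> lab C \<and> b \<in> lab C \<and> c \<in> lab C) \<and>
     (\<forall>a \<in> lab C. \<forall>b. adm C (unit_lab C) a b \<longleftrightarrow> a = b) \<and>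
     (\<forall>a \<in> lab C. \<forall>b. adm C a (unit_lab C) b \<longleftrightarrow> a = b) \<and>
     \<comment> \<open>self-duality of all simples: N_{ab}^c is symmetric in a, b, c\<close>
     (\<forall>a b c. adm C a b c \<longleftrightarrow> adm C b a c) \<and>
     (\<forall>a b c. adm C a b c \<longleftrightarrow> adm C a c b) \<and>
     \<comment> \<open>associativity of the fusion rules\<close>
     (\<forall>a\<in>lab C. \<forall>b\<in>lab C. \<forall>c\<in>lab C. \<forall>e\<in>lab C.
        card {m \<in> lab C. adm C a b m \<and> adm C m c e} = card {n \<in> lab C. adm C b c n \<and> adm C a n e}) \<and>
     \<comment> \<open>quantum dimensions\<close>
     (\<forall>a \<in> lab C. qd C a > 0) \<and> qd C (unit_lab C) = 1 \<and>
     (\<forall>a\<in>lab C. \<forall>b\<in>lab C. qd C a * qd C b = (\<Sum>c \<in> {c \<in> lab C. adm C a b c}. qd C c)) \<and>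
     \<comment> \<open>F-symbols vanish outside admissible configurations\<close>
     (\<forall>a b c e n m. Fsym C a b c e n m \<noteq> 0 \<longrightarrow>
        adm C b c n \<and> adm C a n e \<and> adm C a b m \<and> adm C m c e) \<and>
     \<comment> \<open>unitarity of the F-matrices\<close>
     (\<forall>a\<in>lab C. \<forall>b\<in>lab C. \<forall>c\<in>lab C. \<forall>e\<in>lab C. \<forall>n n'.
        adm C b c n \<and> adm C a n e \<and> adm C b c n' \<and> adm C a n' e \<longrightarrow>
        (\<Sum>m \<in> lab C. Fsym C a b c e n m * cnj (Fsym C a b c e n' m)) = (if n = n' then 1 else 0)) \<and>
     \<comment> \<open>normalization: F-symbols with a trivial upper label are 1 (trivalent vertices with a unit leg are identities)\<close>
     (\<forall>a b c e n m. (a = unit_lab C \<or> b = unit_lab C \<or> c = unit_lab C) \<longrightarrow>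
        adm C b c n \<and> adm C a n e \<and> adm C a b m \<and> adm C m c e \<longrightarrow> Fsym C a b c e n m = 1)"

text \<open>The basis element e^{ab}_{i;cd} is indexed by the tuple (a,b,i,c,d).
Elements of H_C are complex-valued functions on such tuples supported on the basis set.\<close>

type_synonym 'l hidx = "'l \<times> 'l \<times> 'l \<times> 'l \<times> 'l"

definition basisH :: "'l fusion_data \<Rightarrow> 'l hidx set" where
  "basisH C = {(a,b,i,c,d). adm C a i b \<and> adm C i d c}"

definition Hvec :: "'l fusion_data \<Rightarrow> ('l hidx \<Rightarrow> complex) set" where
  "Hvec C = {h. \<forall>x. x \<notin> basisH C \<longrightarrow> h x = 0}"

definition ebas :: "'l hidx \<Rightarrow> 'l hidx \<Rightarrow> complex" where
  "ebas x = (\<lambda>y. if y = x then 1 else 0)"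

definition cscale :: "complex \<Rightarrow> ('a \<Rightarrow> complex) \<Rightarrow> ('a \<Rightarrow> complex)" where
  "cscale c f = (\<lambda>x. c * f x)"

definition sq :: "'l fusion_data \<Rightarrow> 'l \<Rightarrow> complex" where
  "sq C i = complex_of_real (sqrt (qd C i))"

definition Hmult :: "'l fusion_data \<Rightarrow> ('l hidx \<Rightarrow> complex) \<Rightarrow> ('l hidx \<Rightarrow> complex) \<Rightarrow> ('l hidx \<Rightarrow> complex)" where
  "Hmult C h g = (\<lambda>(a,b,i,c',d').
     \<Sum>c\<in>lab C. \<Sum>d\<in>lab C. h (a,b,i,c,d) * g (c,d,i,c',d') / sq C i)"

definition Hunit :: "'l fusion_data \<Rightarrow> 'l hidx \<Rightarrow> complex" where
  "Hunit C = (\<lambda>(a,b,i,c,d). if (a,b,i,c,d) \<in> basisH C \<and> c = a \<and> d = b then sq C i else 0)"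

definition Hcounit :: "'l fusion_data \<Rightarrow> ('l hidx \<Rightarrow> complex) \<Rightarrow> complex" where
  "Hcounit C h = (\<Sum>a\<in>lab C. \<Sum>c\<in>lab C. h (a,a,unit_lab C,c,c))"

text \<open>Comultiplication, as an element of H_C (x) H_C represented by its coefficients
on the tensor basis e_x (x) e_y.\<close>

definition Hcomult :: "'l fusion_data \<Rightarrow> ('l hidx \<Rightarrow> complex) \<Rightarrow> ('l hidx \<times> 'l hidx \<Rightarrow> complex)" where
  "Hcomult C h = (\<lambda>((a,p,j,c,q),(p',b,k,q',d)).
     if (a,p,j,c,q) \<in> basisH C \<and> (p',b,k,q',d) \<in> basisH C \<and> p' = p \<and> q' = q then
       (\<Sum>i\<in>lab C. h (a,b,i,c,d) * sq C j * sq C k / sq C i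
          * Fsym C a j k b i p * Fsym C d k j c i q)
     else 0)"

text \<open>Target counital map eps_t(h) = eps(eta_(1) h) eta_(2).\<close>

definition eps_t :: "'l fusion_data \<Rightarrow> ('l hidx \<Rightarrow> complex) \<Rightarrow> ('l hidx \<Rightarrow> complex)" where
  "eps_t C h = (\<lambda>y. \<Sum>x\<in>basisH C. Hcomult C (Hunit C) (x,y) * Hcounit C (Hmult C (ebas x) h))"

definition Ht :: "'l fusion_data \<Rightarrow> ('l hidx \<Rightarrow> complex) set" where
  "Ht C = eps_t C ` Hvec C"

definition Ht_act :: "'l fusion_data \<Rightarrow> ('l hidx \<Rightarrow> complex) \<Rightarrow> ('l hidx \<Rightarrow> complex) \<Rightarrow> ('l hidx \<Rightarrow> complex)" where
  "Ht_act C h z = eps_t C (Hmult C h z)"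

definition Vmod :: "'l fusion_data \<Rightarrow> 'l \<Rightarrow> ('l \<times> 'l \<Rightarrow> complex) set" where
  "Vmod C i = {v. \<forall>a b. \<not> adm C a i b \<longrightarrow> v (a,b) = 0}"

definition Vact :: "'l fusion_data \<Rightarrow> 'l \<Rightarrow> ('l hidx \<Rightarrow> complex) \<Rightarrow> ('l \<times> 'l \<Rightarrow> complex) \<Rightarrow> ('l \<times> 'l \<Rightarrow> complex)" where
  "Vact C i h v = (\<lambda>(a,b). \<Sum>c\<in>lab C. \<Sum>d\<in>lab C. h (a,b,i,c,d) * v (c,d) / sq C i)"

definition gen :: "'l fusion_data \<Rightarrow> 'l \<Rightarrow> ('l hidx \<Rightarrow> complex)" where
  "gen C a = (\<lambda>(a',b,k,c,e). if a' = a \<and> c = a \<and> e = b \<and> adm C a k b then sq C k / sq C a else 0)"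

end

theory Submission
  imports Defs
begin

text \<open>Since eps(e^{ab}_{i;cd}) = 0 unless i = 1, a = b and c = d, only the components
  e^{aa}_{1;cc} of the first tensor factor of Delta(eta) enter eps_t(h) = eps(eta_(1) h) eta_(2);
  as F-symbols with a unit leg are 1, these components pair e^{aa}_{1;aa} with
  sum_{k,b} sqrt(d_k) e^{ab}_{k;ab}.  Hence eps_t(h) = sum_a phi_a(h) sqrt(d_a) gen(a) with
  phi_a(h) = sum_c h^{aa}_{1;cc}, and every coefficient vector phi occurs.  The coefficients at
  e^{aa}_{1;aa} identify H_t with V_1 as modules; e^{bb}_{1;aa} acts on them as a matrix unit,
  so a nonzero submodule contains every gen(b).\<close>

lemma cscale_vector_space: "vector_space (cscale :: complex \<Rightarrow> ('a \<Rightarrow> complex) \<Rightarrow> 'a \<Rightarrow> complex)"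
  by unfold_locales (auto simp: cscale_def fun_eq_iff algebra_simps)

interpretation cscale: vector_space "cscale :: complex \<Rightarrow> ('a \<Rightarrow> complex) \<Rightarrow> 'a \<Rightarrow> complex"
  by (rule cscale_vector_space)

interpretation cscale_pair: vector_space_pair
    "cscale :: complex \<Rightarrow> ('a \<Rightarrow> complex) \<Rightarrow> 'a \<Rightarrow> complex"
    "cscale :: complex \<Rightarrow> ('b \<Rightarrow> complex) \<Rightarrow> 'b \<Rightarrow> complex"
  by (intro vector_space_pair.intro cscale_vector_space)

lemma sum_fun_apply: "sum f A x = (\<Sum>a\<in>A. f a x)"
  by (induction A rule: infinite_finite_induct) auto

context vector_space_pair
begin

text \<open>Unlike the library's dim_image_eq, this needs no finite-dimensionality.\<close>

lemma dim_image_eq_inj_on_span: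
  assumes f: "Vector_Spaces.linear s1 s2 f" and inj: "inj_on f (vs1.span S)"
  shows "vs2.dim (f ` S) = vs1.dim S"
proof -
  obtain B where B: "B \<subseteq> S" "vs1.independent B" "S \<subseteq> vs1.span B" "card B = vs1.dim S"
    by (rule vs1.basis_exists)
  have span_B: "vs1.span B = vs1.span S"
    using B(1,3) vs1.span_mono vs1.span_span by blast
  show ?thesis
  proof (rule vs2.dim_unique)
    show "f ` B \<subseteq> f ` S"
      using B(1) by blast
    show "f ` S \<subseteq> vs2.span (f ` B)"
      using B(3) by (auto simp: linear_span_image[OF f])
    show "vs2.independent (f ` B)"
      using linear_independent_injective_image[OF f B(2)] inj span_B by simp
    show "card (f ` B) = vs1.dim S"
      using B(1,4) inj_on_subset[OF inj] vs1.span_superset by (metis card_image subset_trans)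
  qed
qed

end

definition Ht_of :: "'l fusion_data \<Rightarrow> ('l \<Rightarrow> complex) \<Rightarrow> 'l hidx \<Rightarrow> complex" where
  "Ht_of C g = (\<lambda>(p,b,k,q,d). if q = p \<and> d = b \<and> adm C p k b then sq C k * g p else 0)"

definition counit_coeff :: "'l fusion_data \<Rightarrow> 'l \<Rightarrow> ('l hidx \<Rightarrow> complex) \<Rightarrow> complex" where
  "counit_coeff C a h = (\<Sum>c\<in>lab C. h (a,a,unit_lab C,c,c))"

definition V1_of :: "'l fusion_data \<Rightarrow> ('l \<Rightarrow> complex) \<Rightarrow> 'l \<times> 'l \<Rightarrow> complex" where
  "V1_of C g = (\<lambda>(a,b). if a = b \<and> a \<in> lab C then g a else 0)"

definition to_V1 :: "'l fusion_data \<Rightarrow> ('l hidx \<Rightarrow> complex) \<Rightarrow> 'l \<times> 'l \<Rightarrow> complex" where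
  "to_V1 C z = V1_of C (\<lambda>a. z (a,a,unit_lab C,a,a))"

locale umf_category =
  fixes C :: "'l fusion_data"
  assumes umf: "umf_fusion C"
begin

lemma finite_lab: "finite (lab C)"
  using umf unfolding umf_fusion_def by (elim conjE)

lemma unit_in_lab: "unit_lab C \<in> lab C"
  using umf unfolding umf_fusion_def by (elim conjE)

lemma adm_in_lab [rule_format]: "\<forall>a b c. adm C a b c \<longrightarrow> a \<in> lab C \<and> b \<in> lab C \<and> c \<in> lab C"
  using umf unfolding umf_fusion_def by (elim conjE) assumption

lemma adm_swap12 [rule_format]: "\<forall>a b c. adm C a b c \<longleftrightarrow> adm C b a c"
  using umf unfolding umf_fusion_def by (elim conjE) assumption

lemma adm_swap23 [rule_format]: "\<forall>a b c. adm C a b c \<longleftrightarrow> adm C a c b"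
  using umf unfolding umf_fusion_def by (elim conjE) assumption

lemma adm_unit_left: "adm C (unit_lab C) a b \<longleftrightarrow> a = b \<and> a \<in> lab C"
proof -
  have "\<forall>a \<in> lab C. \<forall>b. adm C (unit_lab C) a b \<longleftrightarrow> a = b"
    using umf unfolding umf_fusion_def by (elim conjE) assumption
  then show ?thesis
    using adm_in_lab by blast
qed

lemma adm_unit_mid: "adm C a (unit_lab C) b \<longleftrightarrow> a = b \<and> a \<in> lab C"
  using adm_unit_left adm_swap12 by blast

lemma adm_unit_right: "adm C a b (unit_lab C) \<longleftrightarrow> a = b \<and> a \<in> lab C"
  using adm_unit_mid adm_swap23 by blast

lemma qd_pos [rule_format]: "\<forall>a \<in> lab C. qd C a > 0"
  using umf unfolding umf_fusion_def by (elim conjE) assumption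

lemma sq_nonzero: "a \<in> lab C \<Longrightarrow> sq C a \<noteq> 0"
  using qd_pos by (fastforce simp: sq_def)

lemma sq_unit [simp]: "sq C (unit_lab C) = 1"
proof -
  have "qd C (unit_lab C) = 1"
    using umf unfolding umf_fusion_def by (elim conjE)
  then show ?thesis
    by (simp add: sq_def)
qed

lemma Fsym_nonzero_adm [rule_format]:
  "\<forall>a b c e n m. Fsym C a b c e n m \<noteq> 0 \<longrightarrow>
     adm C b c n \<and> adm C a n e \<and> adm C a b m \<and> adm C m c e"
  using umf unfolding umf_fusion_def by (elim conjE) assumption

lemma Fsym_unit_leg [rule_format]:
  "\<forall>a b c e n m. (a = unit_lab C \<or> b = unit_lab C \<or> c = unit_lab C) \<longrightarrow>
     adm C b c n \<and> adm C a n e \<and> adm C a b m \<and> adm C m c e \<longrightarrow> Fsym C a b c e n m = 1"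
  using umf unfolding umf_fusion_def by (elim conjE) assumption

lemma finite_basisH: "finite (basisH C)"
proof (rule finite_subset)
  show "basisH C \<subseteq> lab C \<times> lab C \<times> lab C \<times> lab C \<times> lab C"
    by (auto simp: basisH_def dest: adm_in_lab)
  show "finite (lab C \<times> lab C \<times> lab C \<times> lab C \<times> lab C)"
    using finite_lab by simp
qed

lemma Hmult_ebas_left:
  assumes "c \<in> lab C" "d \<in> lab C"
  shows "Hmult C (ebas (a,b,i,c,d)) h (a',b',i',c',d') =
    (if a' = a \<and> b' = b \<and> i' = i then h (c,d,i,c',d') / sq C i else 0)"
proof -
  have "Hmult C (ebas (a,b,i,c,d)) h (a',b',i',c',d') =
      (\<Sum>c''\<in>lab C. if c'' = c then \<Sum>d''\<in>lab C. if d'' = d then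
         (if a' = a \<and> b' = b \<and> i' = i then h (c,d,i,c',d') / sq C i else 0) else 0 else 0)"
    unfolding Hmult_def ebas_def by (auto intro!: sum.cong)
  then show ?thesis
    using assms finite_lab by simp
qed

lemma Hcounit_ebas_mult:
  assumes x: "(a,b,i,c,d) \<in> basisH C"
  shows "Hcounit C (Hmult C (ebas (a,b,i,c,d)) h) =
    (if b = a \<and> i = unit_lab C then counit_coeff C c h else 0)"
proof -
  have cd: "c \<in> lab C" "d \<in> lab C"
    using x by (auto simp: basisH_def dest: adm_in_lab)
  have "Hcounit C (Hmult C (ebas (a,b,i,c,d)) h) =
      (\<Sum>a'\<in>lab C. if a' = a then (if b = a \<and> i = unit_lab C then
         (\<Sum>c'\<in>lab C. h (c,d,unit_lab C,c',c')) else 0) else 0)"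
    unfolding Hcounit_def Hmult_ebas_left[OF cd]
    by (intro sum.cong refl, cases "b = a \<and> i = unit_lab C") auto
  also have "\<dots> = (if b = a \<and> i = unit_lab C then counit_coeff C c h else 0)"
    using x finite_lab by (auto simp: basisH_def counit_coeff_def adm_unit_left dest: adm_in_lab)
  finally show ?thesis .
qed

lemma Hcomult_Hunit_diag:
  "Hcomult C (Hunit C) ((a,a,unit_lab C,c,c),(p,b,k,q,d)) =
    (if p = a \<and> q = a \<and> c = a \<and> d = b \<and> adm C a k b then sq C k else 0)"
proof -
  \<comment> \<open>Only the channel i = k survives, and there both F-symbols have a unit leg.\<close>
  have summand: "Hunit C (a,b,i,c,d) * sq C (unit_lab C) * sq C k / sq C i
      * Fsym C a (unit_lab C) k b i a * Fsym C d k (unit_lab C) c i c =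
      (if i = k then Hunit C (a,b,k,c,d) else 0)" for i
  proof (cases "i = k \<and> Hunit C (a,b,k,c,d) \<noteq> 0")
    case True
    then have "i = k" "c = a" "d = b" "adm C a k b"
      by (auto simp: Hunit_def basisH_def split: if_splits)
    moreover have "k \<in> lab C" "a \<in> lab C" "b \<in> lab C"
      using \<open>adm C a k b\<close> adm_in_lab by blast+
    ultimately show ?thesis
      using sq_nonzero Fsym_unit_leg adm_swap12 adm_swap23 adm_unit_left adm_unit_mid by auto
  next
    case False
    then show ?thesis
      using Fsym_nonzero_adm[of a "unit_lab C" k b i a] by (auto simp: adm_unit_left)
  qed
  have "Hcomult C (Hunit C) ((a,a,unit_lab C,c,c),(p,b,k,q,d)) =
      (if (a,a,unit_lab C,c,c) \<in> basisH C \<and> (p,b,k,q,d) \<in> basisH C \<and> p = a \<and> q = c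
       then \<Sum>i\<in>lab C. if i = k then Hunit C (a,b,k,c,d) else 0 else 0)"
    by (simp only: Hcomult_def prod.case summand)
  also have "\<dots> = (if p = a \<and> q = a \<and> c = a \<and> d = b \<and> adm C a k b then sq C k else 0)"
    using finite_lab
    by (auto simp: Hunit_def basisH_def adm_unit_left adm_unit_mid adm_unit_right adm_swap12
        adm_swap23 dest: adm_in_lab)
  finally show ?thesis .
qed

lemma eps_t_eq_Ht_of: "eps_t C h = Ht_of C (\<lambda>a. counit_coeff C a h)"
proof
  fix y :: "'l hidx"
  obtain p b k q d where y: "y = (p,b,k,q,d)"
    by (cases y) auto
  let ?z = "Ht_of C (\<lambda>a. counit_coeff C a h)"
  have summand: "Hcomult C (Hunit C) (x,y) * Hcounit C (Hmult C (ebas x) h) =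
      (if x = (p,p,unit_lab C,p,p) then ?z y else 0)" if x: "x \<in> basisH C" for x
  proof -
    obtain a b' i c d' where x_eq: "x = (a,b',i,c,d')"
      by (cases x) auto
    show ?thesis
    proof (cases "b' = a \<and> i = unit_lab C")
      case True
      then have "x = (a,a,unit_lab C,c,c)"
        using x x_eq by (auto simp: basisH_def adm_unit_left)
      then show ?thesis
        using x by (auto simp: y Hcounit_ebas_mult Hcomult_Hunit_diag Ht_of_def)
    next
      case False
      then show ?thesis
        using x x_eq by (auto simp: Hcounit_ebas_mult)
    qed
  qed
  have "eps_t C h y = (\<Sum>x\<in>basisH C. if x = (p,p,unit_lab C,p,p) then ?z y else 0)"
    unfolding eps_t_def by (intro sum.cong refl summand)
  also have "\<dots> = ?z y"
    using finite_basisH by (auto simp: y Ht_of_def basisH_def adm_unit_left adm_unit_mid dest: adm_in_lab)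
  finally show "eps_t C h y = ?z y" .
qed

lemma Ht_of_cong: "(\<And>p. p \<in> lab C \<Longrightarrow> g p = g' p) \<Longrightarrow> Ht_of C g = Ht_of C g'"
  by (auto simp: Ht_of_def fun_eq_iff dest: adm_in_lab)

lemma Ht_of_diag: "a \<in> lab C \<Longrightarrow> Ht_of C g (a,a,unit_lab C,a,a) = g a"
  by (simp add: Ht_of_def adm_unit_mid)

lemma Ht_eq_range_Ht_of: "Ht C = range (Ht_of C)"
proof
  show "Ht C \<subseteq> range (Ht_of C)"
    unfolding Ht_def eps_t_eq_Ht_of by blast
  show "range (Ht_of C) \<subseteq> Ht C"
  proof
    fix z assume "z \<in> range (Ht_of C)"
    then obtain g where z: "z = Ht_of C g" ..
    define h where "h = (\<lambda>(a,b,i,c,d).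
      if a = b \<and> b = c \<and> c = d \<and> i = unit_lab C \<and> a \<in> lab C then g a else 0)"
    have h: "h \<in> Hvec C"
      by (auto simp: Hvec_def h_def basisH_def adm_unit_left adm_unit_mid)
    have "counit_coeff C a h = g a" if "a \<in> lab C" for a
      using that finite_lab by (simp add: counit_coeff_def h_def)
    then have "eps_t C h = z"
      unfolding eps_t_eq_Ht_of z by (rule Ht_of_cong)
    then show "z \<in> Ht C"
      using h unfolding Ht_def by blast
  qed
qed

lemma linear_Ht_of: "Vector_Spaces.linear cscale cscale (Ht_of C)"
  by (auto simp: Vector_Spaces.linear_iff cscale_vector_space Ht_of_def cscale_def fun_eq_iff
      algebra_simps)

lemma subspace_Ht: "cscale.subspace (Ht C)"
  unfolding Ht_eq_range_Ht_of
  by (rule cscale_pair.linear_subspace_image[OF linear_Ht_of cscale.subspace_UNIV])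

lemma gen_eq_Ht_of: "gen C a = Ht_of C (\<lambda>p. if p = a then 1 / sq C a else 0)"
  by (auto simp: gen_def Ht_of_def fun_eq_iff)

lemma Ht_of_eq_sum_gen: "Ht_of C g = (\<Sum>a\<in>lab C. cscale (g a * sq C a) (gen C a))"
proof
  fix y :: "'l hidx"
  obtain p b k q d where y: "y = (p,b,k,q,d)"
    by (cases y) auto
  have "(\<Sum>a\<in>lab C. cscale (g a * sq C a) (gen C a)) y =
      (\<Sum>a\<in>lab C. if a = p then Ht_of C g y else 0)"
    unfolding sum_fun_apply
    by (intro sum.cong refl) (auto simp: y cscale_def gen_def Ht_of_def sq_nonzero)
  then show "Ht_of C g y = (\<Sum>a\<in>lab C. cscale (g a * sq C a) (gen C a)) y"
    using finite_lab by (auto simp: y Ht_of_def dest: adm_in_lab)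
qed

lemma span_gen: "cscale.span (gen C ` lab C) = Ht C"
proof
  show "cscale.span (gen C ` lab C) \<subseteq> Ht C"
    using subspace_Ht by (intro cscale.span_minimal) (auto simp: Ht_eq_range_Ht_of gen_eq_Ht_of)
  show "Ht C \<subseteq> cscale.span (gen C ` lab C)"
    unfolding Ht_eq_range_Ht_of
  proof (intro image_subsetI)
    show "Ht_of C g \<in> cscale.span (gen C ` lab C)" for g
      unfolding Ht_of_eq_sum_gen by (intro cscale.span_sum cscale.span_scale cscale.span_base) auto
  qed
qed

lemma Ht_nontrivial: "Ht C \<noteq> {0}"
proof
  have "gen C (unit_lab C) \<in> Ht C"
    unfolding span_gen[symmetric] by (rule cscale.span_base) (simp add: unit_in_lab)
  moreover assume "Ht C = {0}"
  ultimately have "gen C (unit_lab C) = 0"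
    by blast
  then have "gen C (unit_lab C) (unit_lab C,unit_lab C,unit_lab C,unit_lab C,unit_lab C) = 0"
    by simp
  then show False
    by (simp add: gen_def adm_unit_left unit_in_lab)
qed

lemma Ht_act_Ht_of:
  "Ht_act C h (Ht_of C g) = Ht_of C (\<lambda>p. \<Sum>c\<in>lab C. h (p,p,unit_lab C,c,c) * g c)"
  unfolding Ht_act_def eps_t_eq_Ht_of
proof (rule Ht_of_cong)
  fix p
  have "counit_coeff C p (Hmult C h (Ht_of C g)) = (\<Sum>c\<in>lab C. \<Sum>c'\<in>lab C.
      if c' = c then \<Sum>d'\<in>lab C. if d' = c then h (p,p,unit_lab C,c,c) * g c else 0 else 0)"
    by (auto simp: counit_coeff_def Hmult_def Ht_of_def adm_unit_mid intro!: sum.cong)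
  then show "counit_coeff C p (Hmult C h (Ht_of C g)) = (\<Sum>c\<in>lab C. h (p,p,unit_lab C,c,c) * g c)"
    using finite_lab by simp
qed

lemma Vmod_unit_eq_range_V1_of: "Vmod C (unit_lab C) = range (V1_of C)"
proof
  show "Vmod C (unit_lab C) \<subseteq> range (V1_of C)"
  proof
    fix v assume "v \<in> Vmod C (unit_lab C)"
    then have "v = V1_of C (\<lambda>a. v (a,a))"
      by (auto simp: Vmod_def V1_of_def fun_eq_iff adm_unit_mid)
    then show "v \<in> range (V1_of C)"
      by blast
  qed
  show "range (V1_of C) \<subseteq> Vmod C (unit_lab C)"
    by (auto simp: Vmod_def V1_of_def adm_unit_mid)
qed

lemma to_V1_Ht_of: "to_V1 C (Ht_of C g) = V1_of C g"
  by (auto simp: to_V1_def V1_of_def Ht_of_diag fun_eq_iff)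

lemma linear_to_V1: "Vector_Spaces.linear cscale cscale (to_V1 C)"
  by (auto simp: Vector_Spaces.linear_iff cscale_vector_space to_V1_def V1_of_def cscale_def
      fun_eq_iff)

lemma bij_betw_to_V1: "bij_betw (to_V1 C) (Ht C) (Vmod C (unit_lab C))"
proof (rule bij_betw_imageI)
  show "inj_on (to_V1 C) (Ht C)"
  proof (rule inj_onI)
    fix z z' assume "z \<in> Ht C" "z' \<in> Ht C" and eq: "to_V1 C z = to_V1 C z'"
    then obtain g g' where z: "z = Ht_of C g" and z': "z' = Ht_of C g'"
      by (auto simp: Ht_eq_range_Ht_of)
    have "g p = g' p" if "p \<in> lab C" for p
      using fun_cong[OF eq, of "(p,p)"] that by (simp add: z z' to_V1_Ht_of V1_of_def)
    then show "z = z'"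
      unfolding z z' by (rule Ht_of_cong)
  qed
  show "to_V1 C ` Ht C = Vmod C (unit_lab C)"
    by (simp add: Ht_eq_range_Ht_of Vmod_unit_eq_range_V1_of image_image to_V1_Ht_of)
qed

lemma to_V1_Ht_act:
  assumes h: "h \<in> Hvec C" and z: "z \<in> Ht C"
  shows "to_V1 C (Ht_act C h z) = Vact C (unit_lab C) h (to_V1 C z)"
proof
  fix y :: "'l \<times> 'l"
  obtain a b where y: "y = (a,b)"
    by (cases y) auto
  obtain g where z_eq: "z = Ht_of C g"
    using z by (auto simp: Ht_eq_range_Ht_of)
  \<comment> \<open>Off the diagonal both sides vanish, because h is supported on the basis of H_C.\<close>
  have off_diag: "h (a,b,unit_lab C,c,c) = 0" if "\<not> (a = b \<and> a \<in> lab C)" for c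
  proof -
    have "(a,b,unit_lab C,c,c) \<notin> basisH C"
      using that by (auto simp: basisH_def adm_unit_mid)
    then show ?thesis
      using h by (simp add: Hvec_def)
  qed
  have "Vact C (unit_lab C) h (V1_of C g) (a,b) =
      (\<Sum>c\<in>lab C. \<Sum>d\<in>lab C. if d = c then h (a,b,unit_lab C,c,c) * g c else 0)"
    unfolding Vact_def prod.case by (intro sum.cong refl) (auto simp: V1_of_def)
  then have "Vact C (unit_lab C) h (V1_of C g) (a,b) = (\<Sum>c\<in>lab C. h (a,b,unit_lab C,c,c) * g c)"
    using finite_lab by simp
  then show "to_V1 C (Ht_act C h z) y = Vact C (unit_lab C) h (to_V1 C z) y"
    using off_diag by (auto simp: y z_eq Ht_act_Ht_of to_V1_Ht_of V1_of_def)
qed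

lemma Ht_simple:
  assumes W: "cscale.subspace W" "W \<subseteq> Ht C"
    and W_invariant: "\<forall>h\<in>Hvec C. \<forall>z\<in>W. Ht_act C h z \<in> W"
  shows "W = {0} \<or> W = Ht C"
proof (cases "W = {0}")
  case False
  then obtain z where "z \<in> W" "z \<noteq> 0"
    using cscale.subspace_0[OF W(1)] by blast
  moreover obtain g where z: "z = Ht_of C g"
    using \<open>z \<in> W\<close> W(2) by (auto simp: Ht_eq_range_Ht_of)
  ultimately obtain a where a: "a \<in> lab C" "g a \<noteq> 0"
    using Ht_of_cong[of g "\<lambda>_. 0"] by (fastforce simp: Ht_of_def)
  \<comment> \<open>The matrix unit e^{bb}_{1;aa} moves the a-th coordinate of z to a multiple of gen b.\<close>
  have "gen C b \<in> W" if b: "b \<in> lab C" for b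
  proof -
    have e: "ebas (b,b,unit_lab C,a,a) \<in> Hvec C"
      using a b by (auto simp: Hvec_def ebas_def basisH_def adm_unit_left adm_unit_mid)
    have "Ht_act C (ebas (b,b,unit_lab C,a,a)) z = Ht_of C (\<lambda>p. if p = b then g a else 0)"
      unfolding z Ht_act_Ht_of
    proof (rule Ht_of_cong)
      fix p
      have "(\<Sum>c\<in>lab C. ebas (b,b,unit_lab C,a,a) (p,p,unit_lab C,c,c) * g c) =
          (\<Sum>c\<in>lab C. if c = a then (if p = b then g a else 0) else 0)"
        by (intro sum.cong refl) (auto simp: ebas_def)
      then show "(\<Sum>c\<in>lab C. ebas (b,b,unit_lab C,a,a) (p,p,unit_lab C,c,c) * g c) =
          (if p = b then g a else 0)"
        using a finite_lab by simp
    qed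
    also have "\<dots> = cscale (g a * sq C b) (gen C b)"
      unfolding gen_eq_Ht_of cscale_pair.linear_scale[OF linear_Ht_of, symmetric]
      using sq_nonzero[OF b] by (intro Ht_of_cong) (simp add: cscale_def)
    finally have "cscale (g a * sq C b) (gen C b) \<in> W"
      using W_invariant e \<open>z \<in> W\<close> by metis
    then have "cscale (1 / (g a * sq C b)) (cscale (g a * sq C b) (gen C b)) \<in> W"
      by (rule cscale.subspace_scale[OF W(1)])
    then show ?thesis
      using a sq_nonzero[OF b] by (simp add: cscale_def)
  qed
  then have "Ht C \<subseteq> W"
    unfolding span_gen[symmetric] using W(1) by (intro cscale.span_minimal) auto
  then show ?thesis
    using W(2) by blast
qed simp

end

theorem mainTheorem8:
  fixes C :: "'l fusion_data"
  assumes "umf_fusion C"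
  shows "Ht C = module.span cscale (gen C ` lab C) \<and>
         vector_space.dim cscale (Ht C) = vector_space.dim cscale (Vmod C (unit_lab C)) \<and>
         (\<exists>f. Vector_Spaces.linear cscale cscale f \<and> bij_betw f (Ht C) (Vmod C (unit_lab C)) \<and>
           (\<forall>h\<in>Hvec C. \<forall>z\<in>Ht C. f (Ht_act C h z) = Vact C (unit_lab C) h (f z))) \<and>
         Ht C \<noteq> {0} \<and>
         (\<forall>W. module.subspace cscale W \<longrightarrow> W \<subseteq> Ht C \<longrightarrow>
              (\<forall>h\<in>Hvec C. \<forall>z\<in>W. Ht_act C h z \<in> W) \<longrightarrow> W = {0} \<or> W = Ht C)"
proof -
  interpret umf_category C
    by (rule umf_category.intro) (fact assms)
  have "inj_on (to_V1 C) (cscale.span (Ht C))"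
    unfolding cscale.span_eq_iff[THEN iffD2, OF subspace_Ht]
    using bij_betw_to_V1 by (rule bij_betw_imp_inj_on)
  then have "cscale.dim (to_V1 C ` Ht C) = cscale.dim (Ht C)"
    by (rule cscale_pair.dim_image_eq_inj_on_span[OF linear_to_V1])
  then have "cscale.dim (Ht C) = cscale.dim (Vmod C (unit_lab C))"
    using bij_betw_imp_surj_on[OF bij_betw_to_V1] by simp
  then show ?thesis
    using span_gen linear_to_V1 bij_betw_to_V1 to_V1_Ht_act Ht_nontrivial Ht_simple by blast
qed

end
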